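(* For every finite sequence $\Gamma$ and formula $A$ of the $\nabla$-free language $\mathcal{L}=\{\wedge,\vee,\top,\bot,1,\otimes,\to\}$: $\Gamma\vdash_{\mathbf{FL}_l}A$ if and only if $\Gamma^{\nabla}\vdash_{\mathbf{STL}(N)}A^{\nabla}$.
   Context: Formulas of $\mathcal{L}_\nabla$ are built from variables and constants $1,\top,\bot$ by $\wedge,\vee,\otimes,\to$ and unary $\nabla$; $\mathcal{L}$ is the $\nabla$-free fragment. Sequents $\Gamma\Rightarrow A$ have $\Gamma$ a finite sequence; $\nabla\Gamma$ applies $\nabla$ to each member. $\mathbf{STL}$ has axioms $A\Rightarrow A$, $\Rightarrow1$, $\nabla1\Rightarrow1$, $\Gamma\Rightarrow\top$, $\Gamma,\bot,\Sigma\Rightarrow A$ and rules (premises / conclusion): cut: $\Gamma\Rightarrow A$, $\Pi,A,\Sigma\Rightarrow B$ / $\Pi,\Gamma,\Sigma\Rightarrow B$; $L\wedge$: $\Gamma,A,\Sigma\Rightarrow C$ / $\Gamma,A\wedge B,\Sigma\Rightarrow C$ and $\Gamma,B,\Sigma\Rightarrow C$ / $\Gamma,A\wedge B,\Sigma\Rightarrow C$; $R\wedge$: $\Gamma\Rightarrow A$, $\Gamma\Rightarrow B$ / $\Gamma\Rightarrow A\wedge B$; $L\vee$: $\Gamma,A,\Sigma\Rightarrow C$, $\Gamma,B,\Sigma\Rightarrow C$ / $\Gamma,A\vee B,\Sigma\Rightarrow C$; $R\vee$: $\Gamma\Rightarrow A$ / $\Gamma\Rightarrow A\vee B$ and $\Gamma\Rightarrow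 B$ / $\Gamma\Rightarrow A\vee B$; $L1$: $\Gamma,\Sigma\Rightarrow A$ / $\Gamma,1,\Sigma\Rightarrow A$; $L\otimes$: $\Gamma,A,B,\Sigma\Rightarrow C$ / $\Gamma,A\otimes B,\Sigma\Rightarrow C$; $R\otimes$: $\Gamma\Rightarrow A$, $\Sigma\Rightarrow B$ / $\Gamma,\Sigma\Rightarrow A\otimes B$; $(\nabla)$: $A\Rightarrow B$ / $\nabla A\Rightarrow\nabla B$; Oplax: $\nabla A,\nabla B\Rightarrow C$ / $\nabla(A\otimes B)\Rightarrow C$; $L\to$: $\Gamma\Rightarrow A$, $\Pi,B,\Sigma\Rightarrow C$ / $\Pi,\Gamma,\nabla(A\to B),\Sigma\Rightarrow C$; $R\to$: $A,\nabla\Gamma\Rightarrow B$ / $\Gamma\Rightarrow A\to B$. Schemes: $(N)$: $\Gamma\Rightarrow A$ / $\nabla\Gamma\Rightarrow\nabla A$; $(P)$: $\Gamma\Rightarrow\nabla A$ / $\Gamma\Rightarrow A$; $(F)$: $\Gamma\Rightarrow A$ / $\Gamma\Rightarrow\nabla A$. $\mathbf{STL}(N)$ is $\mathbf{STL}$ plus $(N)$, and $\mathbf{FL}_l$ is $\mathbf{STL}$ plus $(P)$ and $(F)$. Writing $\Box A$ for $1\to A$, the translation $(-)^\nabla:\mathcal{L}\to\mathcal{L}_\nabla$ is: $p^\nabla=\nabla\Box p$ for variables $p$, $\bot^\nabla=\bot$, $\top^\nabla=\nabla\Box\top$, $1^\nabla=1$, $(A\wedge B)^\nabla=\nabla\Box(A^\nabla\wedge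 B^\nabla)$, $(A\vee B)^\nabla=A^\nabla\vee B^\nabla$, $(A\otimes B)^\nabla=A^\nabla\otimes B^\nabla$, $(A\to B)^\nabla=\nabla(A^\nabla\to B^\nabla)$; $\Gamma^\nabla$ translates each member of $\Gamma$. *)

theory Defs
  imports Main
begin

datatype fm =
    Var nat
  | One
  | Top
  | Bot
  | And fm fm
  | Or fm fm
  | Tens fm fm
  | Imp fm fm
  | Nab fm

fun nabla_free :: "fm \<Rightarrow> bool" where
  "nabla_free (Var p) = True"
| "nabla_free One = True"
| "nabla_free Top = True"
| "nabla_free Bot = True"
| "nabla_free (And a b) = (nabla_free a \<and> nabla_free b)"
| "nabla_free (Or a b) = (nabla_free a \<and> nabla_free b)"
| "nabla_free (Tens a b) = (nabla_free a \<and> nabla_free b)"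
| "nabla_free (Imp a b) = (nabla_free a \<and> nabla_free b)"
| "nabla_free (Nab a) = False"

text \<open>Derivability in STL extended by the optional schemes:
  useN enables (N); usePF enables both (P) and (F).\<close>
inductive deriv :: "bool \<Rightarrow> bool \<Rightarrow> fm list \<Rightarrow> fm \<Rightarrow> bool"
  for useN usePF :: bool where
  ax_id: "deriv useN usePF [A] A"
| ax_one: "deriv useN usePF [] One"
| ax_nab_one: "deriv useN usePF [Nab One] One"
| ax_top: "deriv useN usePF \<Gamma> Top"
| ax_bot: "deriv useN usePF (\<Gamma> @ [Bot] @ \<Sigma>) A"
| cut: "deriv useN usePF \<Gamma> A \<Longrightarrow> deriv useN usePF (\<Pi> @ [A] @ \<Sigma>) B
         \<Longrightarrow> deriv useN usePF (\<Pi> @ \<Gamma> @ \<Sigma>) B"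
| and_L1: "deriv useN usePF (\<Gamma> @ [A] @ \<Sigma>) C \<Longrightarrow> deriv useN usePF (\<Gamma> @ [And A B] @ \<Sigma>) C"
| and_L2: "deriv useN usePF (\<Gamma> @ [B] @ \<Sigma>) C \<Longrightarrow> deriv useN usePF (\<Gamma> @ [And A B] @ \<Sigma>) C"
| and_R: "deriv useN usePF \<Gamma> A \<Longrightarrow> deriv useN usePF \<Gamma> B \<Longrightarrow> deriv useN usePF \<Gamma> (And A B)"
| or_L: "deriv useN usePF (\<Gamma> @ [A] @ \<Sigma>) C \<Longrightarrow> deriv useN usePF (\<Gamma> @ [B] @ \<Sigma>) C
         \<Longrightarrow> deriv useN usePF (\<Gamma> @ [Or A B] @ \<Sigma>) C"
| or_R1: "deriv useN usePF \<Gamma> A \<Longrightarrow> deriv useN usePF \<Gamma> (Or A B)"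
| or_R2: "deriv useN usePF \<Gamma> B \<Longrightarrow> deriv useN usePF \<Gamma> (Or A B)"
| one_L: "deriv useN usePF (\<Gamma> @ \<Sigma>) A \<Longrightarrow> deriv useN usePF (\<Gamma> @ [One] @ \<Sigma>) A"
| tens_L: "deriv useN usePF (\<Gamma> @ [A, B] @ \<Sigma>) C \<Longrightarrow> deriv useN usePF (\<Gamma> @ [Tens A B] @ \<Sigma>) C"
| tens_R: "deriv useN usePF \<Gamma> A \<Longrightarrow> deriv useN usePF \<Sigma> B \<Longrightarrow> deriv useN usePF (\<Gamma> @ \<Sigma>) (Tens A B)"
| nab: "deriv useN usePF [A] B \<Longrightarrow> deriv useN usePF [Nab A] (Nab B)"
| oplax: "deriv useN usePF [Nab A, Nab B] C \<Longrightarrow> deriv useN usePF [Nab (Tens A B)] C"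
| imp_L: "deriv useN usePF \<Gamma> A \<Longrightarrow> deriv useN usePF (\<Pi> @ [B] @ \<Sigma>) C
         \<Longrightarrow> deriv useN usePF (\<Pi> @ \<Gamma> @ [Nab (Imp A B)] @ \<Sigma>) C"
| imp_R: "deriv useN usePF (A # map Nab \<Gamma>) B \<Longrightarrow> deriv useN usePF \<Gamma> (Imp A B)"
| sch_N: "useN \<Longrightarrow> deriv useN usePF \<Gamma> A \<Longrightarrow> deriv useN usePF (map Nab \<Gamma>) (Nab A)"
| sch_P: "usePF \<Longrightarrow> deriv useN usePF \<Gamma> (Nab A) \<Longrightarrow> deriv useN usePF \<Gamma> A"
| sch_F: "usePF \<Longrightarrow> deriv useN usePF \<Gamma> A \<Longrightarrow> deriv useN usePF \<Gamma> (Nab A)"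

abbreviation STL_N :: "fm list \<Rightarrow> fm \<Rightarrow> bool" where
  "STL_N \<equiv> deriv True False"

abbreviation FL_l :: "fm list \<Rightarrow> fm \<Rightarrow> bool" where
  "FL_l \<equiv> deriv False True"

definition Box :: "fm \<Rightarrow> fm" where
  "Box A = Imp One A"

fun nabla_tr :: "fm \<Rightarrow> fm" where
  "nabla_tr (Var p) = Nab (Box (Var p))"
| "nabla_tr Bot = Bot"
| "nabla_tr Top = Nab (Box Top)"
| "nabla_tr One = One"
| "nabla_tr (And A B) = Nab (Box (And (nabla_tr A) (nabla_tr B)))"
| "nabla_tr (Or A B) = Or (nabla_tr A) (nabla_tr B)"
| "nabla_tr (Tens A B) = Tens (nabla_tr A) (nabla_tr B)"
| "nabla_tr (Imp A B) = Nab (Imp (nabla_tr A) (nabla_tr B))"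
| "nabla_tr (Nab A) = Nab (nabla_tr A)" \<comment> \<open>not used: translation only applied to nabla-free formulas\<close>

end

theory Submission
  imports Defs
begin

(* Soundness: translate an FL_l derivation rule by rule, after erasing every \<nabla> so that (P) and (F)
   become trivial.  The only rules whose translations are not instances of STL rules are the
   right rules for \<top>, \<and> and \<rightarrow>, whose translated conclusions carry an outermost \<nabla>.  Their
   antecedents are translations, i.e. built from \<nabla>-formulas, \<bottom> and 1 by \<or> and \<otimes>; the left rules
   for these connectives are invertible, so the antecedent can be broken down to a sequence of
   \<nabla>-formulas, where (N) applies.
   Faithfulness: (N) is derivable in FL_l, and in FL_l every formula is interderivable with its
   \<nabla>, hence every \<nabla>-free A with A\<^sup>\<nabla>. *)

lemma deriv_cut_at:
  "deriv u v \<Delta> Y \<Longrightarrow> deriv u v (\<Gamma> @ Y # \<Sigma>) C \<Longrightarrow> deriv u v (\<Gamma> @ \<Delta> @ \<Sigma>) C"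
  using deriv.cut[of u v \<Delta> Y \<Gamma> \<Sigma> C] by simp

lemma deriv_subst_left:
  "deriv u v [X] Y \<Longrightarrow> deriv u v (\<Gamma> @ Y # \<Sigma>) C \<Longrightarrow> deriv u v (\<Gamma> @ X # \<Sigma>) C"
  using deriv_cut_at[of u v "[X]"] by simp

lemma deriv_trans: "deriv u v \<Gamma> A \<Longrightarrow> deriv u v [A] B \<Longrightarrow> deriv u v \<Gamma> B"
  using deriv.cut[of u v \<Gamma> A "[]" "[]" B] by simp

lemma deriv_replace_context:
  assumes "list_all2 (\<lambda>X Y. deriv u v [X] Y) \<Gamma> \<Gamma>'" and "deriv u v (\<Pi> @ \<Gamma>' @ \<Omega>) C"
  shows "deriv u v (\<Pi> @ \<Gamma> @ \<Omega>) C"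
  using assms
proof (induction arbitrary: \<Pi> rule: list_all2_induct)
  case (Cons X \<Gamma> Y \<Gamma>')
  then have "deriv u v (\<Pi> @ Y # \<Gamma> @ \<Omega>) C"
    using "Cons.IH"[of "\<Pi> @ [Y]"] by simp
  from deriv_subst_left[OF Cons.hyps(1) this] show ?case by simp
qed simp

lemma deriv_Or_L_inv1: "deriv u v (\<Gamma> @ Or X Y # \<Sigma>) C \<Longrightarrow> deriv u v (\<Gamma> @ X # \<Sigma>) C"
  by (rule deriv_subst_left[OF deriv.or_R1[OF deriv.ax_id]])

lemma deriv_Or_L_inv2: "deriv u v (\<Gamma> @ Or X Y # \<Sigma>) C \<Longrightarrow> deriv u v (\<Gamma> @ Y # \<Sigma>) C"
  by (rule deriv_subst_left[OF deriv.or_R2[OF deriv.ax_id]])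

lemma deriv_Tens_L_inv: "deriv u v (\<Gamma> @ Tens X Y # \<Sigma>) C \<Longrightarrow> deriv u v (\<Gamma> @ X # Y # \<Sigma>) C"
  using deriv_cut_at[OF deriv.tens_R[OF deriv.ax_id deriv.ax_id, of u v X Y], of \<Gamma> \<Sigma> C] by simp

lemma deriv_One_L_inv: "deriv u v (\<Gamma> @ One # \<Sigma>) C \<Longrightarrow> deriv u v (\<Gamma> @ \<Sigma>) C"
  using deriv_cut_at[OF deriv.ax_one, of u v \<Gamma> \<Sigma> C] by simp

lemma deriv_And_elim1: "deriv u v [And A B] A"
  using deriv.and_L1[of u v "[]" A "[]" A B] by (simp add: deriv.ax_id)

lemma deriv_And_elim2: "deriv u v [And A B] B"
  using deriv.and_L2[of u v "[]" B "[]" B A] by (simp add: deriv.ax_id)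

lemma deriv_And_mono:
  "deriv u v [A] A' \<Longrightarrow> deriv u v [B] B' \<Longrightarrow> deriv u v [And A B] (And A' B')"
  by (intro deriv.and_R deriv_trans[OF deriv_And_elim1] deriv_trans[OF deriv_And_elim2])

lemma deriv_Or_mono:
  "deriv u v [A] A' \<Longrightarrow> deriv u v [B] B' \<Longrightarrow> deriv u v [Or A B] (Or A' B')"
  using deriv.or_L[of u v "[]" A "[]" "Or A' B'" B] by (simp add: deriv.or_R1 deriv.or_R2)

lemma deriv_Tens_mono:
  "deriv u v [A] A' \<Longrightarrow> deriv u v [B] B' \<Longrightarrow> deriv u v [Tens A B] (Tens A' B')"
  using deriv.tens_L[of u v "[]" A B "[]" "Tens A' B'"] deriv.tens_R[of u v "[A]" A' "[B]" B']
  by simp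

lemma deriv_Imp_mono:
  assumes "deriv u v [A'] A" and "deriv u v [B] B'"
  shows "deriv u v [Imp A B] (Imp A' B')"
proof (rule deriv.imp_R)
  show "deriv u v (A' # map Nab [Imp A B]) B'"
    using deriv.imp_L[of u v "[A']" A "[]" B "[]" B'] assms by simp
qed

lemma deriv_Nab_Box_elim: "deriv u v [Nab (Box X)] X"
  using deriv.imp_L[OF deriv.ax_one, of u v "[]" X "[]" X] by (simp add: Box_def deriv.ax_id)

fun nab_guarded :: "fm \<Rightarrow> bool" where
  "nab_guarded (Nab _) = True"
| "nab_guarded Bot = True"
| "nab_guarded One = True"
| "nab_guarded (Or X Y) = (nab_guarded X \<and> nab_guarded Y)"
| "nab_guarded (Tens X Y) = (nab_guarded X \<and> nab_guarded Y)"
| "nab_guarded _ = False"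

lemma nab_guarded_nabla_tr: "nab_guarded (nabla_tr A)"
  by (induction A) auto

lemma STL_N_Nab_Imp_R_if_nab_guarded:
  assumes "list_all nab_guarded \<Gamma>" and "STL_N (A # \<Gamma>) B"
  shows "STL_N \<Gamma> (Nab (Imp A B))"
  using assms
  \<comment> \<open>the factor 2 makes the measure drop when \<open>Tens Y Z\<close> is split into two entries\<close>
proof (induction "size_list (\<lambda>X. 2 * size X) \<Gamma>" arbitrary: \<Gamma> rule: less_induct)
  case less
  show ?case
  proof (cases "\<exists>\<Delta>. \<Gamma> = map Nab \<Delta>")
    case True
    with less.prems(2) show ?thesis by (auto intro: deriv.sch_N deriv.imp_R)
  next
    case False
    then obtain \<Gamma>\<^sub>1 X \<Gamma>\<^sub>2 where \<Gamma>: "\<Gamma> = \<Gamma>\<^sub>1 @ X # \<Gamma>\<^sub>2" and not_Nab: "\<forall>Y. X \<noteq> Nab Y"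
      by (metis ex_map_conv split_list)
    note IH = less.hyps[unfolded \<Gamma>] and prems = less.prems[unfolded \<Gamma>]
    have "STL_N (\<Gamma>\<^sub>1 @ X # \<Gamma>\<^sub>2) (Nab (Imp A B))"
    proof (cases X)
      case Bot
      then show ?thesis using deriv.ax_bot[of True False \<Gamma>\<^sub>1 \<Gamma>\<^sub>2] by simp
    next
      case One
      have "STL_N (A # \<Gamma>\<^sub>1 @ \<Gamma>\<^sub>2) B"
        using deriv_One_L_inv[of True False "A # \<Gamma>\<^sub>1"] prems(2) One by simp
      then have "STL_N (\<Gamma>\<^sub>1 @ \<Gamma>\<^sub>2) (Nab (Imp A B))"
        using IH[of "\<Gamma>\<^sub>1 @ \<Gamma>\<^sub>2"] prems(1) One by simp
      with One show ?thesis using deriv.one_L[of True False \<Gamma>\<^sub>1 \<Gamma>\<^sub>2] by simp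
    next
      case (Or Y Z)
      have "STL_N (A # \<Gamma>\<^sub>1 @ Y # \<Gamma>\<^sub>2) B" and "STL_N (A # \<Gamma>\<^sub>1 @ Z # \<Gamma>\<^sub>2) B"
        using deriv_Or_L_inv1[of True False "A # \<Gamma>\<^sub>1" Y Z \<Gamma>\<^sub>2 B]
          deriv_Or_L_inv2[of True False "A # \<Gamma>\<^sub>1" Y Z \<Gamma>\<^sub>2 B] prems(2) Or by simp_all
      then have "STL_N (\<Gamma>\<^sub>1 @ Y # \<Gamma>\<^sub>2) (Nab (Imp A B))"
          and "STL_N (\<Gamma>\<^sub>1 @ Z # \<Gamma>\<^sub>2) (Nab (Imp A B))"
        using IH[of "\<Gamma>\<^sub>1 @ Y # \<Gamma>\<^sub>2"] IH[of "\<Gamma>\<^sub>1 @ Z # \<Gamma>\<^sub>2"] prems(1) Or by simp_all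
      with Or show ?thesis using deriv.or_L[of True False \<Gamma>\<^sub>1 Y \<Gamma>\<^sub>2 _ Z] by simp
    next
      case (Tens Y Z)
      have "STL_N (A # \<Gamma>\<^sub>1 @ Y # Z # \<Gamma>\<^sub>2) B"
        using deriv_Tens_L_inv[of True False "A # \<Gamma>\<^sub>1"] prems(2) Tens by simp
      then have "STL_N (\<Gamma>\<^sub>1 @ Y # Z # \<Gamma>\<^sub>2) (Nab (Imp A B))"
        using IH[of "\<Gamma>\<^sub>1 @ Y # Z # \<Gamma>\<^sub>2"] prems(1) Tens by simp
      with Tens show ?thesis using deriv.tens_L[of True False \<Gamma>\<^sub>1 Y Z \<Gamma>\<^sub>2] by simp
    qed (use prems not_Nab in auto)
    with \<Gamma> show ?thesis by simp
  qed
qed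

lemma STL_N_Nab_Box_R_if_nab_guarded:
  assumes "list_all nab_guarded \<Gamma>" and "STL_N \<Gamma> C"
  shows "STL_N \<Gamma> (Nab (Box C))"
  unfolding Box_def
  using assms deriv.one_L[of True False "[]" \<Gamma> C] by (simp add: STL_N_Nab_Imp_R_if_nab_guarded)

fun erase :: "fm \<Rightarrow> fm" where
  "erase (Var p) = Var p"
| "erase One = One"
| "erase Top = Top"
| "erase Bot = Bot"
| "erase (And A B) = And (erase A) (erase B)"
| "erase (Or A B) = Or (erase A) (erase B)"
| "erase (Tens A B) = Tens (erase A) (erase B)"
| "erase (Imp A B) = Imp (erase A) (erase B)"
| "erase (Nab A) = erase A"

lemma erase_nabla_free: "nabla_free A \<Longrightarrow> erase A = A"
  by (induction A) auto

lemma STL_N_nabla_tr_erase_if_FL_l: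
  "FL_l \<Gamma> A \<Longrightarrow> STL_N (map (nabla_tr \<circ> erase) \<Gamma>) (nabla_tr (erase A))"
proof (induction rule: deriv.induct)
  case (ax_top \<Gamma>)
  then show ?case
    using STL_N_Nab_Box_R_if_nab_guarded deriv.ax_top
    by (simp add: list_all_iff nab_guarded_nabla_tr)
next
  case (ax_bot \<Gamma> \<Sigma> A)
  then show ?case
    using deriv.ax_bot[of True False "map (nabla_tr \<circ> erase) \<Gamma>"] by (simp add: comp_def)
next
  case (cut \<Gamma> A \<Pi> \<Sigma> B)
  then show ?case
    using deriv_cut_at[OF cut.IH(1), of "map (nabla_tr \<circ> erase) \<Pi>"] by (simp add: comp_def)
next
  case (and_L1 \<Gamma> A \<Sigma> C B)
  then show ?case
    using deriv_subst_left[OF deriv_trans[OF deriv_Nab_Box_elim deriv_And_elim1]]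
    by (simp add: comp_def)
next
  case (and_L2 \<Gamma> B \<Sigma> C A)
  then show ?case
    using deriv_subst_left[OF deriv_trans[OF deriv_Nab_Box_elim deriv_And_elim2]]
    by (simp add: comp_def)
next
  case (and_R \<Gamma> A B)
  then show ?case
    using STL_N_Nab_Box_R_if_nab_guarded
    by (simp add: list_all_iff nab_guarded_nabla_tr deriv.and_R)
next
  case (or_L \<Gamma> A \<Sigma> C B)
  then show ?case
    using deriv.or_L[of True False "map (nabla_tr \<circ> erase) \<Gamma>" "nabla_tr (erase A)"]
    by (simp add: comp_def)
next
  case (one_L \<Gamma> \<Sigma> A)
  then show ?case
    using deriv.one_L[of True False "map (nabla_tr \<circ> erase) \<Gamma>"] by (simp add: comp_def)
next
  case (tens_L \<Gamma> A B \<Sigma> C)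
  then show ?case
    using deriv.tens_L[of True False "map (nabla_tr \<circ> erase) \<Gamma>"] by (simp add: comp_def)
next
  case (tens_R \<Gamma> A \<Sigma> B)
  then show ?case
    using deriv.tens_R[of True False "map (nabla_tr \<circ> erase) \<Gamma>"] by (simp add: comp_def)
next
  case (oplax A B C)
  then show ?case using deriv.tens_L[of True False "[]" _ _ "[]"] by (simp add: comp_def)
next
  case (imp_L \<Gamma> A \<Pi> B \<Sigma> C)
  then show ?case
    using deriv.imp_L[of True False "map (nabla_tr \<circ> erase) \<Gamma>"] by (simp add: comp_def)
next
  case (imp_R A \<Gamma> B)
  then show ?case
    using STL_N_Nab_Imp_R_if_nab_guarded
    by (simp add: list_all_iff nab_guarded_nabla_tr comp_def)
qed (simp_all add: deriv.ax_id deriv.ax_one deriv.or_R1 deriv.or_R2)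

lemma FL_l_Nab_elim: "FL_l [Nab X] X"
  by (simp add: deriv.sch_P deriv.ax_id)

lemma FL_l_Nab_intro: "FL_l [X] (Nab X)"
  by (simp add: deriv.sch_F deriv.ax_id)

lemma FL_l_if_STL_N: "STL_N \<Gamma> A \<Longrightarrow> FL_l \<Gamma> A"
proof (induction rule: deriv.induct)
  case (sch_N \<Gamma> A)
  have "list_all2 (\<lambda>X Y. FL_l [X] Y) (map Nab \<Gamma>) \<Gamma>"
    by (simp add: list_all2_map1 list_all2_same FL_l_Nab_elim)
  with deriv.sch_F[OF _ sch_N.IH] show ?case
    using deriv_replace_context[of False True _ _ "[]" "[]"] by simp
qed (rule deriv.intros; assumption | simp)+

definition FL_l_equiv :: "fm \<Rightarrow> fm \<Rightarrow> bool" where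
  "FL_l_equiv A B \<longleftrightarrow> FL_l [A] B \<and> FL_l [B] A"

lemma FL_l_equiv_refl: "FL_l_equiv A A"
  unfolding FL_l_equiv_def by (simp add: deriv.ax_id)

lemma FL_l_equiv_trans: "FL_l_equiv A B \<Longrightarrow> FL_l_equiv B C \<Longrightarrow> FL_l_equiv A C"
  unfolding FL_l_equiv_def by (metis deriv_trans)

lemma FL_l_equiv_Nab: "FL_l_equiv X (Nab X)"
  unfolding FL_l_equiv_def by (simp add: FL_l_Nab_intro FL_l_Nab_elim)

lemma FL_l_equiv_Box: "FL_l_equiv X (Box X)"
proof -
  have "FL_l ([] @ [One] @ [Nab X]) X"
    by (rule deriv.one_L) (simp add: FL_l_Nab_elim)
  then have "FL_l [X] (Box X)"
    unfolding Box_def by (intro deriv.imp_R) simp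
  then show ?thesis
    unfolding FL_l_equiv_def using FL_l_Nab_intro deriv_Nab_Box_elim deriv_trans by blast
qed

lemma FL_l_equiv_Nab_Box: "FL_l_equiv X (Nab (Box X))"
  by (rule FL_l_equiv_trans[OF FL_l_equiv_Box FL_l_equiv_Nab])

lemma FL_l_equiv_And:
  "FL_l_equiv A A' \<Longrightarrow> FL_l_equiv B B' \<Longrightarrow> FL_l_equiv (And A B) (And A' B')"
  unfolding FL_l_equiv_def by (simp add: deriv_And_mono)

lemma FL_l_equiv_Or:
  "FL_l_equiv A A' \<Longrightarrow> FL_l_equiv B B' \<Longrightarrow> FL_l_equiv (Or A B) (Or A' B')"
  unfolding FL_l_equiv_def by (simp add: deriv_Or_mono)

lemma FL_l_equiv_Tens:
  "FL_l_equiv A A' \<Longrightarrow> FL_l_equiv B B' \<Longrightarrow> FL_l_equiv (Tens A B) (Tens A' B')"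
  unfolding FL_l_equiv_def by (simp add: deriv_Tens_mono)

lemma FL_l_equiv_Imp:
  "FL_l_equiv A A' \<Longrightarrow> FL_l_equiv B B' \<Longrightarrow> FL_l_equiv (Imp A B) (Imp A' B')"
  unfolding FL_l_equiv_def by (simp add: deriv_Imp_mono)

lemma FL_l_equiv_nabla_tr: "nabla_free A \<Longrightarrow> FL_l_equiv A (nabla_tr A)"
proof (induction A)
  case (And A B)
  then show ?case
    using FL_l_equiv_trans[OF FL_l_equiv_And FL_l_equiv_Nab_Box] by simp
next
  case (Imp A B)
  then show ?case
    using FL_l_equiv_trans[OF FL_l_equiv_Imp FL_l_equiv_Nab] by simp
qed (simp_all add: FL_l_equiv_refl FL_l_equiv_Nab_Box FL_l_equiv_Or FL_l_equiv_Tens)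

theorem theorem7p14:
  assumes "list_all nabla_free \<Gamma>" and "nabla_free A"
  shows "FL_l \<Gamma> A \<longleftrightarrow> STL_N (map nabla_tr \<Gamma>) (nabla_tr A)"
proof
  assume "FL_l \<Gamma> A"
  then have "STL_N (map (nabla_tr \<circ> erase) \<Gamma>) (nabla_tr (erase A))"
    by (rule STL_N_nabla_tr_erase_if_FL_l)
  moreover have "map (nabla_tr \<circ> erase) \<Gamma> = map nabla_tr \<Gamma>"
    using assms(1) by (simp add: list_all_iff erase_nabla_free)
  ultimately show "STL_N (map nabla_tr \<Gamma>) (nabla_tr A)"
    using assms(2) by (simp add: erase_nabla_free)
next
  assume "STL_N (map nabla_tr \<Gamma>) (nabla_tr A)"
  then have "FL_l (map nabla_tr \<Gamma>) A"
    using FL_l_if_STL_N FL_l_equiv_nabla_tr[OF assms(2)] deriv_trans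
    unfolding FL_l_equiv_def by blast
  moreover have "list_all2 (\<lambda>X Y. FL_l [X] Y) \<Gamma> (map nabla_tr \<Gamma>)"
    using assms(1) FL_l_equiv_nabla_tr
    by (simp add: list_all2_map2 list_all2_same list_all_iff FL_l_equiv_def)
  ultimately show "FL_l \<Gamma> A"
    using deriv_replace_context[of False True _ _ "[]" "[]"] by simp
qed

end
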